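(* Let $\overline{\mathrm{PRCN}}\subseteq\mathbb{R}$ be the set of real numbers of the form $I+\sum_{i=1}^\infty P(i)2^{-i}$ with $I\in\mathbb{Z}$ and $P:\mathbb{Z}^+\to\{0,1\}$ primitive recursive, and let $\overline{\mathrm{SPRCN}}\subseteq\mathbb{R}$ be the set of real numbers of the form $I+\sum_{i=1}^\infty P(i)2^{-i}$ with $I\in\mathbb{Z}$ and $P:\mathbb{Z}^+\to\{-1,0,1\}$ primitive recursive. Then $\overline{\mathrm{PRCN}}\subsetneq\overline{\mathrm{SPRCN}}$; that is, there is a real number which is the value of some signed primitive recursive binary series with digits in $\{-1,0,1\}$ but which has no binary expansion (with digits in $\{0,1\}$, after an integer part) given by a primitive recursive digit function.
   Context: A function $\mathbb{Z}^+\to\{0,1\}$ or $\mathbb{Z}^+\to\{-1,0,1\}$ is primitive recursive if it is obtained from a primitive recursive $P':\mathbb{N}\to\mathbb{N}$ via a primitive recursive encoding of the finitely many values. *)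

theory Defs
  imports Complex_Main
begin

fun prec_fun :: "(nat list \<Rightarrow> nat) \<Rightarrow> (nat list \<Rightarrow> nat) \<Rightarrow> nat \<Rightarrow> nat list \<Rightarrow> nat" where
  "prec_fun g h 0 ys = g ys"
| "prec_fun g h (Suc k) ys = h (k # prec_fun g h k ys # ys)"

text \<open>PR n f: f is an n-ary primitive recursive function (arguments as a list
  of length n).\<close>

inductive PR :: "nat \<Rightarrow> (nat list \<Rightarrow> nat) \<Rightarrow> bool" where
  zero: "PR n (\<lambda>_. 0)"
| succ: "PR 1 (\<lambda>xs. Suc (hd xs))"
| proj: "i < n \<Longrightarrow> PR n (\<lambda>xs. xs ! i)"
| comp: "PR m f \<Longrightarrow> length gs = m \<Longrightarrow> (\<forall>g\<in>set gs. PR n g)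
          \<Longrightarrow> PR n (\<lambda>xs. f (map (\<lambda>g. g xs) gs))"
| prec: "PR n g \<Longrightarrow> PR (Suc (Suc n)) h
          \<Longrightarrow> PR (Suc n) (\<lambda>xs. prec_fun g h (hd xs) (tl xs))"

definition prim_rec1 :: "(nat \<Rightarrow> nat) \<Rightarrow> bool" where
  "prim_rec1 P \<longleftrightarrow> (\<exists>f. PR 1 f \<and> (\<forall>x. P x = f [x]))"

text \<open>A digit function Z+ -> {-1,0,1} is given by a unary primitive recursive
  P' : nat -> nat with values in {0,1,2}; digit i is P' i - 1.\<close>

definition PRCN :: "real set" where
  "PRCN = {x. \<exists>(I::int) P. prim_rec1 P \<and> (\<forall>i. P i \<le> 1) \<and>
              x = of_int I + (\<Sum>i. real (P (Suc i)) / 2 ^ Suc i)}"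

definition SPRCN :: "real set" where
  "SPRCN = {x. \<exists>(I::int) P. prim_rec1 P \<and> (\<forall>i. P i \<le> 2) \<and>
              x = of_int I + (\<Sum>i. (real (P (Suc i)) - 1) / 2 ^ Suc i)}"

end

theory Submission
  imports Defs "HOL-Library.Nat_Bijection"
begin

text \<open>Primitive recursive functions have numerical codes, and a finite trace certifying the value of
  code \<open>c\<close> at \<open>x\<close> can be checked primitive recursively, although it cannot be found within any
  primitive recursive bound uniformly in \<open>c\<close>. The signed digit sequence therefore diagonalises
  slowly: it treats the codes \<open>c = 0, 1, 2, \<dots>\<close> in consecutive blocks. The block of \<open>c\<close> starts at
  some position \<open>k\<close> and consists of digits \<open>0\<close>, one per candidate certificate, until the value of
  code \<open>c\<close> at \<open>k\<close> is certified; then it writes \<open>-1\<close> if that value is \<open>0\<close> and \<open>+1\<close> otherwise,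
  followed by the digit \<open>0\<close> that opens the next block. The tail of the resulting series after
  position \<open>k\<close> then has the sign of that digit and modulus below \<open>1\<close>, which forces digit \<open>k\<close> of
  every \<open>{0, 1}\<close>-expansion of the same number to be \<open>1\<close> resp. \<open>0\<close>, contradicting code \<open>c\<close>.
  The inclusion itself only shifts digits by one.\<close>

section \<open>Primitive recursive functions on argument lists\<close>

definition arg :: "nat \<Rightarrow> nat list \<Rightarrow> nat" where
  "arg k xs = (if k < length xs then xs ! k else 0)"

lemma arg_Cons_0 [simp]: "arg 0 (x # xs) = x"
  by (simp add: arg_def)

lemma arg_Cons_Suc [simp]: "arg (Suc k) (x # xs) = arg k xs"
  by (simp add: arg_def)

lemma arg_tl [simp]: "arg k (tl xs) = arg (Suc k) xs"
  by (cases xs) (simp_all add: arg_def)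

lemma map_arg_upt: "length xs = n + k \<Longrightarrow> map (\<lambda>i. arg i xs) [k..<n + k] = drop k xs"
  by (rule nth_equalityI) (simp_all add: arg_def)

text \<open>Unlike \<open>PR\<close>, this notion only sees argument lists of length \<open>n\<close> and is invariant under
  extensional equality there, so closure properties can be stated for arbitrary HOL terms.\<close>

definition prim_rec :: "nat \<Rightarrow> (nat list \<Rightarrow> nat) \<Rightarrow> bool" where
  "prim_rec n F \<longleftrightarrow> (\<exists>f. PR n f \<and> (\<forall>xs. length xs = n \<longrightarrow> f xs = F xs))"

lemma prim_rec1_iff: "prim_rec1 P \<longleftrightarrow> prim_rec 1 (\<lambda>xs. P (arg 0 xs))"
proof
  assume "prim_rec1 P"
  then show "prim_rec 1 (\<lambda>xs. P (arg 0 xs))"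
    unfolding prim_rec1_def prim_rec_def by (auto simp: length_Suc_conv)
qed (auto simp: prim_rec1_def prim_rec_def)

lemma prim_rec_cong: "prim_rec n F \<Longrightarrow> (\<And>xs. length xs = n \<Longrightarrow> F xs = G xs) \<Longrightarrow> prim_rec n G"
  unfolding prim_rec_def by metis

lemma prim_rec_arg: "k < n \<Longrightarrow> prim_rec n (arg k)"
  unfolding prim_rec_def by (auto intro!: exI[of _ "\<lambda>xs. xs ! k"] PR.proj simp: arg_def)

lemma prim_rec_comp:
  assumes G: "prim_rec m G" and len: "length Fs = m" and Fs: "\<forall>F\<in>set Fs. prim_rec n F"
  shows "prim_rec n (\<lambda>xs. G (map (\<lambda>F. F xs) Fs))"
proof -
  obtain g where g: "PR m g" "\<forall>xs. length xs = m \<longrightarrow> g xs = G xs"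
    using G unfolding prim_rec_def by blast
  obtain f where f: "\<forall>F\<in>set Fs. PR n (f F) \<and> (\<forall>xs. length xs = n \<longrightarrow> f F xs = F xs)"
    using Fs unfolding prim_rec_def by metis
  have "PR n (\<lambda>xs. g (map (\<lambda>h. h xs) (map f Fs)))"
    using g(1) f len by (intro PR.comp) auto
  moreover have "g (map (\<lambda>h. h xs) (map f Fs)) = G (map (\<lambda>F. F xs) Fs)" if "length xs = n" for xs
    using that f g(2) len by (simp cong: map_cong)
  ultimately show ?thesis
    unfolding prim_rec_def by blast
qed

lemma prim_rec_reindex:
  "prim_rec m G \<Longrightarrow> length is = m \<Longrightarrow> \<forall>i\<in>set is. i < n \<Longrightarrow> prim_rec n (\<lambda>xs. G (map (\<lambda>i. arg i xs) is))"
  using prim_rec_comp[of m G "map arg is" n] by (simp add: comp_def prim_rec_arg)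

lemma prim_rec_tl: "prim_rec n F \<Longrightarrow> prim_rec (Suc n) (\<lambda>xs. F (tl xs))"
  by (rule prim_rec_cong[OF prim_rec_reindex[of n F "[1..<n + 1]"]])
     (auto simp: map_arg_upt[where k = 1, simplified] drop_Suc)

lemma prim_rec_Cons: "prim_rec (Suc n) F \<Longrightarrow> prim_rec n K \<Longrightarrow> prim_rec n (\<lambda>xs. F (K xs # xs))"
  by (rule prim_rec_cong[OF prim_rec_comp[of "Suc n" F "K # map arg [0..<n]" n]])
     (simp_all add: prim_rec_arg comp_def map_arg_upt[where k = 0, simplified])

lemma prim_rec_prec_fun:
  assumes "prim_rec n G" and "prim_rec (Suc (Suc n)) H"
  shows "prim_rec (Suc n) (\<lambda>xs. prec_fun G H (hd xs) (tl xs))"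
proof -
  obtain g h where g: "PR n g" "\<forall>xs. length xs = n \<longrightarrow> g xs = G xs"
    and h: "PR (Suc (Suc n)) h" "\<forall>xs. length xs = Suc (Suc n) \<longrightarrow> h xs = H xs"
    using assms unfolding prim_rec_def by blast
  have "prec_fun g h k ys = prec_fun G H k ys" if "length ys = n" for k ys
    using that g(2) h(2) by (induction k) simp_all
  then show ?thesis
    unfolding prim_rec_def by (auto intro!: exI[of _ "\<lambda>xs. prec_fun g h (hd xs) (tl xs)"] PR.prec g h)
qed

lemma prim_rec_rec_nat:
  assumes "prim_rec n G" and "prim_rec (Suc (Suc n)) (\<lambda>ys. H (arg 0 ys) (arg (Suc 0) ys) (tl (tl ys)))"
    and "prim_rec n K"
  shows "prim_rec n (\<lambda>xs. rec_nat (G xs) (\<lambda>k r. H k r xs) (K xs))"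
proof -
  have "prec_fun G (\<lambda>ys. H (arg 0 ys) (arg (Suc 0) ys) (tl (tl ys))) k xs = rec_nat (G xs) (\<lambda>k r. H k r xs) k"
    for k xs by (induction k) simp_all
  then have "prim_rec (Suc n) (\<lambda>ys. rec_nat (G (tl ys)) (\<lambda>k r. H k r (tl ys)) (hd ys))"
    using prim_rec_prec_fun[OF assms(1,2)] by simp
  from prim_rec_Cons[OF this assms(3)] show ?thesis
    by simp
qed

lemma prim_rec_arg_0: "prim_rec (Suc n) (arg 0)"
  by (simp add: prim_rec_arg)

lemma prim_rec_arg_Suc: "prim_rec n (arg k) \<Longrightarrow> prim_rec (Suc n) (arg (Suc k))"
  using prim_rec_tl[of n "arg k"] by simp

lemma prim_rec_Suc:
  assumes "prim_rec n A"
  shows "prim_rec n (\<lambda>xs. Suc (A xs))"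
proof -
  have "prim_rec 1 (\<lambda>xs. Suc (arg 0 xs))"
    unfolding prim_rec_def
    using PR.succ by (auto intro!: exI[of _ "\<lambda>xs. Suc (hd xs)"] simp: length_Suc_conv)
  from prim_rec_comp[OF this, of "[A]" n] assms show ?thesis
    by simp
qed

lemmas prim_rec_intros = prim_rec_arg_0 prim_rec_arg_Suc prim_rec_Suc

lemma prim_rec_const: "prim_rec n (\<lambda>_. c)"
proof (induction c)
  case 0
  show ?case unfolding prim_rec_def by (auto intro: PR.zero)
qed (rule prim_rec_Suc)

lemma prim_rec_add:
  assumes A: "prim_rec n A" and B: "prim_rec n B"
  shows "prim_rec n (\<lambda>xs. A xs + B xs)"
proof -
  have "prim_rec n (\<lambda>xs. rec_nat (B xs) (\<lambda>k r. Suc r) (A xs))"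
    by (rule prim_rec_rec_nat[OF B _ A]) (intro prim_rec_intros)
  moreover have "rec_nat b (\<lambda>k r. Suc r) a = a + b" for a b :: nat
    by (induction a) simp_all
  ultimately show ?thesis by simp
qed

lemma prim_rec_mult:
  assumes A: "prim_rec n A" and B: "prim_rec n B"
  shows "prim_rec n (\<lambda>xs. A xs * B xs)"
proof -
  have "prim_rec n (\<lambda>xs. rec_nat 0 (\<lambda>k r. r + B xs) (A xs))"
    by (intro prim_rec_rec_nat[OF _ _ A] prim_rec_add prim_rec_const prim_rec_tl B prim_rec_intros)
  moreover have "rec_nat 0 (\<lambda>k r. r + b) a = a * b" for a b :: nat
    by (induction a) simp_all
  ultimately show ?thesis by simp
qed

lemma prim_rec_minus_one:
  assumes A: "prim_rec n A"
  shows "prim_rec n (\<lambda>xs. A xs - 1)"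
proof -
  have "prim_rec n (\<lambda>xs. rec_nat 0 (\<lambda>k r. k) (A xs))"
    by (intro prim_rec_rec_nat[OF _ _ A] prim_rec_const prim_rec_intros)
  moreover have "rec_nat 0 (\<lambda>k r. k) a = a - 1" for a :: nat
    by (cases a) simp_all
  ultimately show ?thesis by simp
qed

lemma prim_rec_diff:
  assumes A: "prim_rec n A" and B: "prim_rec n B"
  shows "prim_rec n (\<lambda>xs. A xs - B xs)"
proof -
  have "prim_rec n (\<lambda>xs. rec_nat (A xs) (\<lambda>k r. r - 1) (B xs))"
    by (intro prim_rec_rec_nat[OF A _ B] prim_rec_minus_one prim_rec_intros)
  moreover have "rec_nat a (\<lambda>k r. r - 1) b = a - b" for a b :: nat
    by (induction b) simp_all
  ultimately show ?thesis by simp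
qed

definition prim_rec_pred :: "nat \<Rightarrow> (nat list \<Rightarrow> bool) \<Rightarrow> bool" where
  "prim_rec_pred n P \<longleftrightarrow> prim_rec n (\<lambda>xs. of_bool (P xs))"

lemma prim_rec_pred_cong:
  "prim_rec_pred n P \<Longrightarrow> (\<And>xs. length xs = n \<Longrightarrow> P xs = Q xs) \<Longrightarrow> prim_rec_pred n Q"
  unfolding prim_rec_pred_def by (erule prim_rec_cong) simp

lemma prim_rec_If:
  assumes "prim_rec_pred n P" "prim_rec n A" "prim_rec n B"
  shows "prim_rec n (\<lambda>xs. if P xs then A xs else B xs)"
proof -
  have "prim_rec n (\<lambda>xs. of_bool (P xs) * A xs + (1 - of_bool (P xs)) * B xs)"
    using assms unfolding prim_rec_pred_def by (intro prim_rec_add prim_rec_mult prim_rec_diff prim_rec_const)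
  then show ?thesis
    by (rule prim_rec_cong) simp
qed

lemma prim_rec_pred_eq:
  assumes "prim_rec n A" "prim_rec n B"
  shows "prim_rec_pred n (\<lambda>xs. A xs = B xs)"
proof -
  have "prim_rec n (\<lambda>xs. 1 - ((A xs - B xs) + (B xs - A xs)))"
    using assms by (intro prim_rec_add prim_rec_diff prim_rec_const)
  then show ?thesis
    unfolding prim_rec_pred_def by (rule prim_rec_cong) auto
qed

lemma prim_rec_pred_less:
  assumes "prim_rec n A" "prim_rec n B"
  shows "prim_rec_pred n (\<lambda>xs. A xs < B xs)"
proof -
  have "prim_rec n (\<lambda>xs. 1 - (1 - (B xs - A xs)))"
    using assms by (intro prim_rec_diff prim_rec_const)
  then show ?thesis
    unfolding prim_rec_pred_def by (rule prim_rec_cong) auto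
qed

lemma prim_rec_pred_not:
  assumes "prim_rec_pred n P"
  shows "prim_rec_pred n (\<lambda>xs. \<not> P xs)"
proof -
  have "prim_rec n (\<lambda>xs. 1 - of_bool (P xs))"
    using assms unfolding prim_rec_pred_def by (intro prim_rec_diff prim_rec_const)
  then show ?thesis
    unfolding prim_rec_pred_def by (rule prim_rec_cong) simp
qed

lemma prim_rec_pred_conj:
  assumes "prim_rec_pred n P" "prim_rec_pred n Q"
  shows "prim_rec_pred n (\<lambda>xs. P xs \<and> Q xs)"
proof -
  have "prim_rec n (\<lambda>xs. of_bool (P xs) * of_bool (Q xs))"
    using assms unfolding prim_rec_pred_def by (intro prim_rec_mult)
  then show ?thesis
    unfolding prim_rec_pred_def by (rule prim_rec_cong) simp
qed

lemma prim_rec_pred_disj: "prim_rec_pred n P \<Longrightarrow> prim_rec_pred n Q \<Longrightarrow> prim_rec_pred n (\<lambda>xs. P xs \<or> Q xs)"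
  using prim_rec_pred_not[OF prim_rec_pred_conj[OF prim_rec_pred_not prim_rec_pred_not]]
  by (rule prim_rec_pred_cong) simp_all

lemma prim_rec_pred_imp: "prim_rec_pred n P \<Longrightarrow> prim_rec_pred n Q \<Longrightarrow> prim_rec_pred n (\<lambda>xs. P xs \<longrightarrow> Q xs)"
  using prim_rec_pred_disj[OF prim_rec_pred_not] by (rule prim_rec_pred_cong) simp_all

lemma prim_rec_pred_If:
  assumes "prim_rec_pred n P" "prim_rec_pred n Q" "prim_rec_pred n R"
  shows "prim_rec_pred n (\<lambda>xs. if P xs then Q xs else R xs)"
proof -
  have "prim_rec n (\<lambda>xs. if P xs then of_bool (Q xs) else of_bool (R xs))"
    using assms unfolding prim_rec_pred_def by (intro prim_rec_If[OF assms(1)])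
  then show ?thesis
    unfolding prim_rec_pred_def by (rule prim_rec_cong) simp
qed

lemma prim_rec_sum:
  assumes F: "prim_rec (Suc n) (\<lambda>ys. F (arg 0 ys) (tl ys))" and B: "prim_rec n B"
  shows "prim_rec n (\<lambda>xs. \<Sum>i<B xs. F i xs)"
proof -
  have "prim_rec (Suc (Suc n)) (\<lambda>zs. F (arg 0 zs) (tl (tl zs)))"
  proof (rule prim_rec_cong[OF prim_rec_reindex[OF F, of "0 # [2..<n + 2]"]])
    fix zs :: "nat list"
    assume "length zs = Suc (Suc n)"
    then have "map (\<lambda>i. arg i zs) [2..<n + 2] = tl (tl zs)"
      using map_arg_upt[of zs n 2] by (simp add: numeral_2_eq_2 drop_Suc)
    then show "F (arg 0 (map (\<lambda>i. arg i zs) (0 # [2..<n + 2]))) (tl (map (\<lambda>i. arg i zs) (0 # [2..<n + 2])))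
        = F (arg 0 zs) (tl (tl zs))"
      by simp
  qed auto
  then have "prim_rec n (\<lambda>xs. rec_nat 0 (\<lambda>k r. r + F k xs) (B xs))"
    by (intro prim_rec_rec_nat[OF _ _ B] prim_rec_add prim_rec_const prim_rec_intros)
  moreover have "rec_nat 0 (\<lambda>k r. r + F k xs) b = (\<Sum>i<b. F i xs)" for b xs
    by (induction b) simp_all
  ultimately show ?thesis by simp
qed

lemma prim_rec_pred_ex:
  assumes "prim_rec_pred (Suc n) (\<lambda>ys. P (arg 0 ys) (tl ys))" and "prim_rec n B"
  shows "prim_rec_pred n (\<lambda>xs. \<exists>i<B xs. P i xs)"
proof -
  have "prim_rec_pred n (\<lambda>xs. 0 < (\<Sum>i<B xs. of_bool (P i xs) :: nat))"
    using assms unfolding prim_rec_pred_def by (intro prim_rec_pred_less[unfolded prim_rec_pred_def] prim_rec_sum prim_rec_const)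
  then show ?thesis
    by (rule prim_rec_pred_cong) (auto simp: card_gt_0_iff)
qed

lemma prim_rec_pred_all:
  "prim_rec_pred (Suc n) (\<lambda>ys. P (arg 0 ys) (tl ys)) \<Longrightarrow> prim_rec n B \<Longrightarrow>
    prim_rec_pred n (\<lambda>xs. \<forall>i<B xs. P i xs)"
  using prim_rec_pred_not[OF prim_rec_pred_ex[OF prim_rec_pred_not]] by (rule prim_rec_pred_cong) auto

lemmas prim_rec_arith_intros =
  prim_rec_intros prim_rec_const prim_rec_add prim_rec_mult prim_rec_minus_one prim_rec_diff prim_rec_If
  prim_rec_sum prim_rec_pred_eq prim_rec_pred_less prim_rec_pred_not prim_rec_pred_conj prim_rec_pred_disj
  prim_rec_pred_imp prim_rec_pred_If prim_rec_pred_ex prim_rec_pred_all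

section \<open>Arithmetic and coding\<close>

lemma prim_rec_power2:
  assumes "prim_rec n A"
  shows "prim_rec n (\<lambda>xs. 2 ^ A xs)"
proof -
  have "prim_rec n (\<lambda>xs. rec_nat 1 (\<lambda>k r. r + r) (A xs))"
    by (intro prim_rec_rec_nat[OF _ _ assms] prim_rec_arith_intros)
  moreover have "rec_nat 1 (\<lambda>k r. r + r) a = (2 :: nat) ^ a" for a
    by (induction a) simp_all
  ultimately show ?thesis by simp
qed

lemma prim_rec_prod_encode:
  assumes "prim_rec n A" "prim_rec n B"
  shows "prim_rec n (\<lambda>xs. prod_encode (A xs, B xs))"
proof -
  have "rec_nat 0 (\<lambda>k r. r + Suc k) a = triangle a" for a
    by (induction a) simp_all
  moreover have "prim_rec n (\<lambda>xs. rec_nat 0 (\<lambda>k r. r + Suc k) (A xs + B xs) + A xs)"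
    using assms by (intro prim_rec_rec_nat prim_rec_arith_intros)
  ultimately show ?thesis
    by (simp add: prod_encode_def)
qed

text \<open>The unique witness below the bound is the sum of all witnesses below it.\<close>

lemma prim_rec_unique_witness:
  assumes P: "prim_rec_pred (Suc n) (\<lambda>ys. P (arg 0 ys) (tl ys))" and B: "prim_rec n B"
    and W: "\<And>xs. length xs = n \<Longrightarrow> W xs < B xs \<and> (\<forall>x. P x xs \<longleftrightarrow> x = W xs)"
  shows "prim_rec n W"
proof -
  have "prim_rec n (\<lambda>xs. \<Sum>x<B xs. if P x xs then x else 0)"
    using P B unfolding prim_rec_pred_def by (intro prim_rec_arith_intros[unfolded prim_rec_pred_def])
  then show ?thesis
    by (rule prim_rec_cong) (simp add: W sum.delta)
qed

lemma prim_rec_fst_prod_decode: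
  assumes "prim_rec n A"
  shows "prim_rec n (\<lambda>xs. fst (prod_decode (A xs)))"
proof (rule prim_rec_unique_witness)
  show "prim_rec_pred (Suc n) (\<lambda>ys. \<exists>b<A (tl ys) + 1. prod_encode (arg 0 ys, b) = A (tl ys))"
    by (intro prim_rec_arith_intros prim_rec_prod_encode prim_rec_tl assms | simp only: arg_tl)+
  fix xs :: "nat list"
  obtain a b where "A xs = prod_encode (a, b)"
    by (metis prod_decode_inverse prod.collapse)
  then show "fst (prod_decode (A xs)) < A xs + 1 \<and>
      (\<forall>x. (\<exists>b<A xs + 1. prod_encode (x, b) = A xs) \<longleftrightarrow> x = fst (prod_decode (A xs)))"
    using le_prod_encode_1[of a b] le_prod_encode_2[of b a] by auto
qed (intro prim_rec_arith_intros assms)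

lemma prim_rec_snd_prod_decode:
  assumes "prim_rec n A"
  shows "prim_rec n (\<lambda>xs. snd (prod_decode (A xs)))"
proof (rule prim_rec_unique_witness)
  show "prim_rec_pred (Suc n) (\<lambda>ys. \<exists>a<A (tl ys) + 1. prod_encode (a, arg 0 ys) = A (tl ys))"
    by (intro prim_rec_arith_intros prim_rec_prod_encode prim_rec_tl assms | simp only: arg_tl)+
  fix xs :: "nat list"
  obtain a b where "A xs = prod_encode (a, b)"
    by (metis prod_decode_inverse prod.collapse)
  then show "snd (prod_decode (A xs)) < A xs + 1 \<and>
      (\<forall>x. (\<exists>a<A xs + 1. prod_encode (a, x) = A xs) \<longleftrightarrow> x = snd (prod_decode (A xs)))"
    using le_prod_encode_1[of a b] le_prod_encode_2[of b a] by auto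
qed (intro prim_rec_arith_intros assms)

lemma prim_rec_div:
  assumes "prim_rec n A" "prim_rec n B"
  shows "prim_rec n (\<lambda>xs. A xs div B xs)"
proof (rule prim_rec_unique_witness)
  show "prim_rec_pred (Suc n)
      (\<lambda>ys. (\<exists>r<B (tl ys). A (tl ys) = B (tl ys) * arg 0 ys + r) \<or> B (tl ys) = 0 \<and> arg 0 ys = 0)"
    by (intro prim_rec_arith_intros prim_rec_tl assms | simp only: arg_tl)+
  fix xs :: "nat list"
  show "A xs div B xs < A xs + 1 \<and>
      (\<forall>q. (\<exists>r<B xs. A xs = B xs * q + r) \<or> B xs = 0 \<and> q = 0 \<longleftrightarrow> q = A xs div B xs)"
  proof (cases "B xs = 0")
    case False
    have "A xs = B xs * q + r \<Longrightarrow> r < B xs \<Longrightarrow> q = A xs div B xs" for q r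
      by simp
    moreover have "\<exists>r<B xs. A xs = B xs * (A xs div B xs) + r"
      using False by (intro exI[of _ "A xs mod B xs"]) simp
    ultimately show ?thesis
      using False by (auto simp: le_imp_less_Suc)
  qed simp
qed (intro prim_rec_arith_intros assms)

lemma prim_rec_mod:
  assumes "prim_rec n A" "prim_rec n B"
  shows "prim_rec n (\<lambda>xs. A xs mod B xs)"
  using prim_rec_diff[OF assms(1) prim_rec_mult[OF prim_rec_div[OF assms] assms(2)]]
  by (simp add: minus_div_mult_eq_mod)

lemma prim_rec_pred_member:
  assumes "prim_rec n A" "prim_rec n B"
  shows "prim_rec_pred n (\<lambda>xs. A xs \<in> set_decode (B xs))"
proof -
  have "prim_rec_pred n (\<lambda>xs. B xs div 2 ^ A xs mod 2 = 1)"
    by (intro prim_rec_arith_intros prim_rec_mod prim_rec_div prim_rec_power2 assms)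
  then show ?thesis
    by (rule prim_rec_pred_cong) (simp add: set_decode_def odd_iff_mod_2_eq_one)
qed

lemma prod_decode_0 [simp]: "prod_decode 0 = (0, 0)"
proof -
  have "prod_encode (0, 0) = 0"
    by (simp add: prod_encode_def)
  then show ?thesis
    by (metis prod_encode_inverse)
qed

definition hd_code :: "nat \<Rightarrow> nat" where
  "hd_code l = fst (prod_decode (l - 1))"

definition tl_code :: "nat \<Rightarrow> nat" where
  "tl_code l = snd (prod_decode (l - 1))"

definition nth_code :: "nat \<Rightarrow> nat \<Rightarrow> nat" where
  "nth_code l i = hd_code ((tl_code ^^ i) l)"

definition length_code :: "nat \<Rightarrow> nat" where
  "length_code l = (\<Sum>i<l. of_bool ((tl_code ^^ i) l \<noteq> 0))"

lemma hd_code_list_encode [simp]: "hd_code (list_encode xs) = arg 0 xs"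
  by (cases xs) (simp_all add: hd_code_def arg_def)

lemma tl_code_list_encode [simp]: "tl_code (list_encode xs) = list_encode (tl xs)"
  by (cases xs) (simp_all add: tl_code_def)

lemma funpow_tl_code_list_encode [simp]: "(tl_code ^^ k) (list_encode xs) = list_encode (drop k xs)"
  by (induction k) (simp_all add: drop_Suc tl_drop)

lemma nth_code_list_encode [simp]: "nth_code (list_encode xs) i = arg i xs"
  by (simp add: nth_code_def arg_def hd_drop_conv_nth)

lemma length_le_list_encode: "length xs \<le> list_encode xs"
  by (induction xs) (auto intro: le_trans le_prod_encode_2)

lemma member_less_list_encode: "x \<in> set xs \<Longrightarrow> x < list_encode xs"
proof (induction xs)
  case (Cons y ys)
  then show ?case
    using le_prod_encode_1[of y "list_encode ys"] le_prod_encode_2[of "list_encode ys" y] by auto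
qed simp

lemma length_code_list_encode [simp]: "length_code (list_encode xs) = length xs"
proof -
  have "list_encode ys = 0 \<longleftrightarrow> ys = []" for ys
    by (cases ys) simp_all
  then have "list_encode (drop i xs) \<noteq> 0 \<longleftrightarrow> i < length xs" for i
    by (simp add: not_le)
  then have "length_code (list_encode xs) = card ({..<list_encode xs} \<inter> {..<length xs})"
    by (simp add: length_code_def Int_def lessThan_def)
  also have "{..<list_encode xs} \<inter> {..<length xs} = {..<length xs}"
    using length_le_list_encode[of xs] by auto
  finally show ?thesis by simp
qed

lemma prim_rec_hd_code: "prim_rec n A \<Longrightarrow> prim_rec n (\<lambda>xs. hd_code (A xs))"
  unfolding hd_code_def by (intro prim_rec_fst_prod_decode prim_rec_minus_one)

lemma prim_rec_tl_code: "prim_rec n A \<Longrightarrow> prim_rec n (\<lambda>xs. tl_code (A xs))"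
  unfolding tl_code_def by (intro prim_rec_snd_prod_decode prim_rec_minus_one)

lemma prim_rec_funpow_tl_code:
  assumes "prim_rec n K" "prim_rec n A"
  shows "prim_rec n (\<lambda>xs. (tl_code ^^ K xs) (A xs))"
proof -
  have "prim_rec n (\<lambda>xs. rec_nat (A xs) (\<lambda>k r. tl_code r) (K xs))"
    by (intro prim_rec_rec_nat[OF assms(2) _ assms(1)] prim_rec_tl_code prim_rec_intros)
  moreover have "rec_nat a (\<lambda>k r. tl_code r) k = (tl_code ^^ k) a" for a k
    by (induction k) simp_all
  ultimately show ?thesis by simp
qed

lemma prim_rec_nth_code: "prim_rec n A \<Longrightarrow> prim_rec n I \<Longrightarrow> prim_rec n (\<lambda>xs. nth_code (A xs) (I xs))"
  unfolding nth_code_def by (intro prim_rec_hd_code prim_rec_funpow_tl_code)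

lemma prim_rec_length_code:
  assumes "prim_rec n A"
  shows "prim_rec n (\<lambda>xs. length_code (A xs))"
proof -
  have "prim_rec_pred (Suc n) (\<lambda>ys. (tl_code ^^ arg 0 ys) (A (tl ys)) \<noteq> 0)"
    by (intro prim_rec_arith_intros prim_rec_funpow_tl_code prim_rec_tl assms)
  then show ?thesis
    unfolding length_code_def prim_rec_pred_def by (rule prim_rec_sum[OF _ assms])
qed

section \<open>A universal evaluator for codes\<close>

definition code_fst :: "nat \<Rightarrow> nat" where
  "code_fst c = fst (prod_decode (c div 5))"

definition code_snd :: "nat \<Rightarrow> nat" where
  "code_snd c = snd (prod_decode (c div 5))"

lemma fst_prod_decode_le: "fst (prod_decode p) \<le> p"
  by (metis le_prod_encode_1 prod.collapse prod_decode_inverse)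

lemma snd_prod_decode_le: "snd (prod_decode p) \<le> p"
  by (metis le_prod_encode_2 prod.collapse prod_decode_inverse)

lemma code_fst_less: "0 < c \<Longrightarrow> code_fst c < c"
  unfolding code_fst_def using fst_prod_decode_le[of "c div 5"] by simp

lemma code_snd_less: "0 < c \<Longrightarrow> code_snd c < c"
  unfolding code_snd_def using snd_prod_decode_le[of "c div 5"] by simp

text \<open>Codes of primitive recursive functions, read off modulo 5: \<open>0\<close> is the zero function,
  \<open>1\<close> the successor, \<open>5 i + 2\<close> the \<open>i\<close>-th projection, \<open>5 \<langle>f, [g\<^sub>1, \<dots>, g\<^sub>m]\<rangle> + 3\<close> the
  composition of \<open>f\<close> with \<open>g\<^sub>1, \<dots>, g\<^sub>m\<close> and \<open>5 \<langle>g, h\<rangle> + 4\<close> the primitive recursion with base \<open>g\<close>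
  and step \<open>h\<close>.\<close>

function eval_code :: "nat \<Rightarrow> nat list \<Rightarrow> nat" where
  "eval_code c xs =
    (if c mod 5 = 0 then 0
     else if c mod 5 = 1 then Suc (arg 0 xs)
     else if c mod 5 = 2 then arg (c div 5) xs
     else if c mod 5 = 3 then eval_code (code_fst c) (map (\<lambda>u. eval_code u xs) (list_decode (code_snd c)))
     else if arg 0 xs = 0 then eval_code (code_fst c) (tl xs)
     else eval_code (code_snd c) ((arg 0 xs - 1) # eval_code c ((arg 0 xs - 1) # tl xs) # tl xs))"
  by pat_completeness auto
termination
proof (relation "measures [fst, \<lambda>(c, xs). arg 0 xs]", goal_cases)
  case (2 c xs u)
  then have "u < code_snd c"
    using member_less_list_encode[of u "list_decode (code_snd c)"] by simp
  moreover have "0 < c"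
    using 2(1) by (cases c) simp_all
  ultimately show ?case
    using code_snd_less[of c] by simp
qed (auto simp: code_fst_less code_snd_less gr0I)

declare eval_code.simps [simp del]

lemma eval_code_comp:
  "eval_code (5 * prod_encode (f, list_encode gs) + 3) xs = eval_code f (map (\<lambda>g. eval_code g xs) gs)"
  by (subst eval_code.simps) (simp add: code_fst_def code_snd_def)

lemma eval_code_prec:
  "eval_code (5 * prod_encode (g, h) + 4) (k # ys) = prec_fun (eval_code g) (eval_code h) k ys"
proof (induction k)
  case 0
  show ?case
    by (subst eval_code.simps) (simp add: code_fst_def)
next
  case (Suc k)
  show ?case
    by (subst eval_code.simps) (simp add: code_snd_def Suc.IH)
qed

lemma eval_code_zero: "eval_code 0 xs = 0"
  by (subst eval_code.simps) simp

lemma eval_code_succ: "eval_code (Suc 0) xs = Suc (arg 0 xs)"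
  by (subst eval_code.simps) simp

lemma eval_code_proj: "eval_code (5 * i + 2) xs = arg i xs"
proof -
  have code: "(5 * i + 2) mod 5 = (2 :: nat)" "(5 * i + 2) div 5 = i"
    by presburger+
  show ?thesis
    by (subst eval_code.simps, simp only: code, simp)
qed

lemma PR_ex_code: "PR n f \<Longrightarrow> \<exists>c. \<forall>xs. length xs = n \<longrightarrow> f xs = eval_code c xs"
proof (induction rule: PR.induct)
  case (zero n)
  show ?case
    by (rule exI[of _ 0]) (simp add: eval_code_zero)
next
  case succ
  show ?case
    by (rule exI[of _ "Suc 0"]) (auto simp: eval_code_succ length_Suc_conv)
next
  case (proj i n)
  show ?case
    using eval_code_proj[of i] proj by (intro exI[of _ "5 * i + 2"]) (simp add: arg_def)
next
  case (comp m f gs n)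
  obtain cf where cf: "\<forall>xs. length xs = m \<longrightarrow> f xs = eval_code cf xs"
    using comp.IH by blast
  obtain cg where cg: "\<forall>g\<in>set gs. \<forall>xs. length xs = n \<longrightarrow> g xs = eval_code (cg g) xs"
    using comp.IH by metis
  show ?case
  proof (rule exI[of _ "5 * prod_encode (cf, list_encode (map cg gs)) + 3"], intro allI impI)
    fix xs :: "nat list"
    assume "length xs = n"
    then show "f (map (\<lambda>g. g xs) gs) = eval_code (5 * prod_encode (cf, list_encode (map cg gs)) + 3) xs"
      using cf cg comp.hyps(2) by (simp add: eval_code_comp cong: map_cong)
  qed
next
  case (prec n g h)
  then obtain cg ch where cg: "\<forall>xs. length xs = n \<longrightarrow> g xs = eval_code cg xs"
    and ch: "\<forall>xs. length xs = Suc (Suc n) \<longrightarrow> h xs = eval_code ch xs"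
    by blast
  have "prec_fun g h k ys = prec_fun (eval_code cg) (eval_code ch) k ys" if "length ys = n" for k ys
    using that cg ch by (induction k) simp_all
  then show ?case
    by (intro exI[of _ "5 * prod_encode (cg, ch) + 4"]) (auto simp: length_Suc_conv eval_code_prec)
qed

section \<open>Evaluation traces\<close>

definition triple_encode :: "nat \<Rightarrow> nat \<Rightarrow> nat \<Rightarrow> nat" where
  "triple_encode c l v = prod_encode (c, prod_encode (l, v))"

lemma triple_encode_eq_iff [simp]:
  "triple_encode c l v = triple_encode c' l' v' \<longleftrightarrow> c = c' \<and> l = l' \<and> v = v'"
  by (simp add: triple_encode_def)

lemma triple_encode_decode:
  "triple_encode (fst (prod_decode t)) (fst (prod_decode (snd (prod_decode t)))) (snd (prod_decode (snd (prod_decode t)))) = t"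
  by (simp add: triple_encode_def)

lemma le_triple_encode: "c \<le> triple_encode c l v" "l \<le> triple_encode c l v" "v \<le> triple_encode c l v"
  unfolding triple_encode_def by (metis le_prod_encode_1 le_prod_encode_2 le_trans)+

text \<open>A trace is a set of encoded claims \<open>eval_code c xs = v\<close>, each obtained from claims in the
  set by one unfolding of the equation of \<open>eval_code\<close>.\<close>

definition justified :: "nat set \<Rightarrow> nat \<Rightarrow> nat list \<Rightarrow> nat \<Rightarrow> bool" where
  "justified A c xs v \<longleftrightarrow>
    (if c mod 5 = 0 then v = 0
     else if c mod 5 = 1 then v = Suc (arg 0 xs)
     else if c mod 5 = 2 then v = arg (c div 5) xs
     else if c mod 5 = 3 then
       (\<exists>ws. length ws = length (list_decode (code_snd c)) \<and>
          triple_encode (code_fst c) (list_encode ws) v \<in> A \<and>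
          (\<forall>i<length ws. triple_encode (list_decode (code_snd c) ! i) (list_encode xs) (ws ! i) \<in> A))
     else if arg 0 xs = 0 then triple_encode (code_fst c) (list_encode (tl xs)) v \<in> A
     else (\<exists>w. triple_encode c (list_encode ((arg 0 xs - 1) # tl xs)) w \<in> A \<and>
               triple_encode (code_snd c) (list_encode ((arg 0 xs - 1) # w # tl xs)) v \<in> A))"

definition valid_trace :: "nat set \<Rightarrow> bool" where
  "valid_trace A \<longleftrightarrow> (\<forall>c xs v. triple_encode c (list_encode xs) v \<in> A \<longrightarrow> justified A c xs v)"

lemma justified_mono: "A \<subseteq> B \<Longrightarrow> justified A c xs v \<Longrightarrow> justified B c xs v"
  unfolding justified_def by (auto split: if_splits)

lemma valid_trace_Union: "\<forall>A\<in>F. valid_trace A \<Longrightarrow> valid_trace (\<Union>F)"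
  unfolding valid_trace_def by (meson Union_iff Union_upper justified_mono)

lemma valid_trace_insert:
  "valid_trace A \<Longrightarrow> justified A c xs v \<Longrightarrow> valid_trace (insert (triple_encode c (list_encode xs) v) A)"
  unfolding valid_trace_def by (auto simp: list_encode_eq intro: justified_mono[rotated])

lemma valid_trace_sound: "valid_trace A \<Longrightarrow> triple_encode c (list_encode xs) v \<in> A \<Longrightarrow> v = eval_code c xs"
proof (induction c xs arbitrary: v rule: eval_code.induct)
  case (1 c xs)
  have J: "justified A c xs v"
    using "1.prems" unfolding valid_trace_def by blast
  consider "c mod 5 \<in> {0, 1, 2}" | "c mod 5 = 3" | "c mod 5 = 4"
    by fastforce
  then show ?case
  proof cases
    case 1
    then show ?thesis
      using J by (subst eval_code.simps) (auto simp: justified_def)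
  next
    case 2
    define us where "us = list_decode (code_snd c)"
    obtain ws where ws: "length ws = length us" "triple_encode (code_fst c) (list_encode ws) v \<in> A"
      "\<forall>i<length ws. triple_encode (us ! i) (list_encode xs) (ws ! i) \<in> A"
      using J 2 unfolding justified_def us_def by auto
    have "ws = map (\<lambda>u. eval_code u xs) us"
    proof (rule nth_equalityI)
      fix i
      assume "i < length ws"
      then show "ws ! i = map (\<lambda>u. eval_code u xs) us ! i"
        using "1.IH"(1)[OF _ _ _ 2 _ "1.prems"(1), of "us ! i" "ws ! i"] ws 2 by (simp add: us_def)
    qed (simp add: ws(1))
    then show ?thesis
      using "1.IH"(2)[OF _ _ _ 2 "1.prems"(1)] ws(2) 2 by (subst eval_code.simps) (simp add: us_def)
  next
    case 3
    show ?thesis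
    proof (cases "arg 0 xs = 0")
      case True
      then show ?thesis
        using J 3 "1.IH"(3)[OF _ _ _ _ True "1.prems"(1)] by (subst eval_code.simps) (simp add: justified_def)
    next
      case False
      then obtain w where w: "triple_encode c (list_encode ((arg 0 xs - 1) # tl xs)) w \<in> A"
        "triple_encode (code_snd c) (list_encode ((arg 0 xs - 1) # w # tl xs)) v \<in> A"
        using J 3 unfolding justified_def by auto
      have "w = eval_code c ((arg 0 xs - 1) # tl xs)"
        using "1.IH"(4)[OF _ _ _ _ False "1.prems"(1) w(1)] 3 by simp
      then show ?thesis
        using "1.IH"(5)[OF _ _ _ _ False "1.prems"(1)] 3 False w(2) by (subst eval_code.simps) simp
    qed
  qed
qed

lemma justified_finite_subset: "justified A c xs v \<Longrightarrow> \<exists>B\<subseteq>A. finite B \<and> justified B c xs v"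
proof -
  assume J: "justified A c xs v"
  consider "c mod 5 \<in> {0, 1, 2}" | "c mod 5 = 3" | "c mod 5 = 4" "arg 0 xs = 0" | "c mod 5 = 4" "arg 0 xs \<noteq> 0"
    by fastforce
  then show ?thesis
  proof cases
    case 1
    then show ?thesis
      using J by (intro exI[of _ "{}"]) (auto simp: justified_def)
  next
    case 2
    define us where "us = list_decode (code_snd c)"
    obtain ws where ws: "length ws = length us" "triple_encode (code_fst c) (list_encode ws) v \<in> A"
      "\<forall>i<length ws. triple_encode (us ! i) (list_encode xs) (ws ! i) \<in> A"
      using J 2 unfolding justified_def us_def by auto
    define B where "B = insert (triple_encode (code_fst c) (list_encode ws) v)
      ((\<lambda>i. triple_encode (us ! i) (list_encode xs) (ws ! i)) ` {..<length ws})"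
    have "justified B c xs v"
      using 2 ws(1) unfolding justified_def us_def[symmetric] B_def by auto
    moreover have "B \<subseteq> A"
      using ws unfolding B_def by auto
    ultimately show ?thesis
      unfolding B_def by blast
  next
    case 3
    then show ?thesis
      using J by (intro exI[of _ "{triple_encode (code_fst c) (list_encode (tl xs)) v}"]) (auto simp: justified_def)
  next
    case 4
    then obtain w where "triple_encode c (list_encode ((arg 0 xs - 1) # tl xs)) w \<in> A"
        "triple_encode (code_snd c) (list_encode ((arg 0 xs - 1) # w # tl xs)) v \<in> A"
      using J unfolding justified_def by auto
    with 4 show ?thesis
      by (intro exI[of _ "{triple_encode c (list_encode ((arg 0 xs - 1) # tl xs)) w,
          triple_encode (code_snd c) (list_encode ((arg 0 xs - 1) # w # tl xs)) v}"]) (auto simp: justified_def)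
  qed
qed

definition finitely_traced :: "nat set" where
  "finitely_traced = \<Union>{A. finite A \<and> valid_trace A}"

lemma finite_subset_finitely_traced:
  "finite B \<Longrightarrow> B \<subseteq> finitely_traced \<Longrightarrow> \<exists>C. finite C \<and> valid_trace C \<and> B \<subseteq> C"
proof (induction B rule: finite_induct)
  case empty
  show ?case
    using valid_trace_Union[of "{}"] by blast
next
  case (insert t B)
  then obtain C D where "finite C" "valid_trace C" "B \<subseteq> C" "finite D" "valid_trace D" "t \<in> D"
    unfolding finitely_traced_def by blast
  then show ?case
    using valid_trace_Union[of "{C, D}"] by (intro exI[of _ "C \<union> D"]) auto
qed

lemma finitely_traced_closed:
  assumes "justified finitely_traced c xs v"
  shows "triple_encode c (list_encode xs) v \<in> finitely_traced"
proof -
  obtain B where "B \<subseteq> finitely_traced" "finite B" "justified B c xs v"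
    using justified_finite_subset[OF assms] by blast
  then obtain C where "finite C" "valid_trace C" "justified C c xs v"
    using finite_subset_finitely_traced justified_mono by meson
  then have "finite (insert (triple_encode c (list_encode xs) v) C)"
    "valid_trace (insert (triple_encode c (list_encode xs) v) C)"
    by (simp_all add: valid_trace_insert)
  then show ?thesis
    unfolding finitely_traced_def by blast
qed

lemma eval_code_finitely_traced: "triple_encode c (list_encode xs) (eval_code c xs) \<in> finitely_traced"
proof (induction c xs rule: eval_code.induct)
  case (1 c xs)
  have "justified finitely_traced c xs (eval_code c xs)"
  proof -
    consider "c mod 5 \<in> {0, 1, 2}" | "c mod 5 = 3" | "c mod 5 = 4"
      by fastforce
    then show ?thesis
    proof cases
      case 1
      then show ?thesis
        by (subst eval_code.simps) (auto simp: justified_def)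
    next
      case 2
      then show ?thesis
        using "1.IH"(1,2) unfolding justified_def
        by (subst eval_code.simps) (auto intro!: exI[of _ "map (\<lambda>u. eval_code u xs) (list_decode (code_snd c))"])
    next
      case 3
      have "eval_code c xs = (if arg 0 xs = 0 then eval_code (code_fst c) (tl xs)
          else eval_code (code_snd c) ((arg 0 xs - 1) # eval_code c ((arg 0 xs - 1) # tl xs) # tl xs))"
        using 3 by (subst eval_code.simps) simp
      then show ?thesis
        using 3 "1.IH"(3-5) unfolding justified_def by auto
    qed
  qed
  then show ?case
    by (rule finitely_traced_closed)
qed

lemma valid_trace_complete:
  "\<exists>A. finite A \<and> valid_trace A \<and> triple_encode c (list_encode xs) (eval_code c xs) \<in> A"
  using eval_code_finitely_traced unfolding finitely_traced_def by blast

section \<open>Certificates are primitive recursively checkable\<close>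

lemma mem_set_decode_less: "e \<in> set_decode S \<Longrightarrow> e < S"
proof -
  assume "e \<in> set_decode S"
  then have "set_decode (set_encode {e}) \<subseteq> set_decode S"
    by (subst set_encode_inverse) simp_all
  then have "2 ^ e \<le> S"
    using subset_decode_imp_le by fastforce
  then show "e < S"
    using less_exp[of e] by linarith
qed

definition cons_code :: "nat \<Rightarrow> nat \<Rightarrow> nat" where
  "cons_code x l = Suc (prod_encode (x, l))"

text \<open>The bounds \<open>wl < S\<close> and \<open>w < S\<close> cost nothing, since every element of \<open>set_decode S\<close> is
  below \<open>S\<close>; they make the quantifiers bounded.\<close>

definition justified_code :: "nat \<Rightarrow> nat \<Rightarrow> nat \<Rightarrow> nat \<Rightarrow> bool" where
  "justified_code S c l v \<longleftrightarrow>
    (if c mod 5 = 0 then v = 0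
     else if c mod 5 = 1 then v = Suc (hd_code l)
     else if c mod 5 = 2 then v = nth_code l (c div 5)
     else if c mod 5 = 3 then
       (\<exists>wl<S. length_code wl = length_code (code_snd c) \<and>
          triple_encode (code_fst c) wl v \<in> set_decode S \<and>
          (\<forall>i<length_code (code_snd c). triple_encode (nth_code (code_snd c) i) l (nth_code wl i) \<in> set_decode S))
     else if hd_code l = 0 then triple_encode (code_fst c) (tl_code l) v \<in> set_decode S
     else (\<exists>w<S. triple_encode c (cons_code (hd_code l - 1) (tl_code l)) w \<in> set_decode S \<and>
               triple_encode (code_snd c) (cons_code (hd_code l - 1) (cons_code w (tl_code l))) v \<in> set_decode S))"

lemma justified_code_iff: "justified_code S c (list_encode xs) v \<longleftrightarrow> justified (set_decode S) c xs v"
proof -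
  define us where "us = list_decode (code_snd c)"
  have less_S: "l < S" "w < S" if "triple_encode c' l w \<in> set_decode S" for c' l w
    using mem_set_decode_less[OF that] le_triple_encode[where c = c' and l = l and v = w] by linarith+
  have comp: "(\<exists>wl<S. length_code wl = length us \<and> triple_encode (code_fst c) wl v \<in> set_decode S \<and>
        (\<forall>i<length us. triple_encode (arg i us) (list_encode xs) (nth_code wl i) \<in> set_decode S)) \<longleftrightarrow>
      (\<exists>ws. length ws = length us \<and> triple_encode (code_fst c) (list_encode ws) v \<in> set_decode S \<and>
        (\<forall>i<length ws. triple_encode (us ! i) (list_encode xs) (ws ! i) \<in> set_decode S))"
  proof
    assume "\<exists>wl<S. length_code wl = length us \<and> triple_encode (code_fst c) wl v \<in> set_decode S \<and>
        (\<forall>i<length us. triple_encode (arg i us) (list_encode xs) (nth_code wl i) \<in> set_decode S)"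
    then obtain wl where "length_code wl = length us" "triple_encode (code_fst c) wl v \<in> set_decode S"
        "\<forall>i<length us. triple_encode (arg i us) (list_encode xs) (nth_code wl i) \<in> set_decode S"
      by blast
    moreover have "wl = list_encode (list_decode wl)"
      by simp
    ultimately show "\<exists>ws. length ws = length us \<and> triple_encode (code_fst c) (list_encode ws) v \<in> set_decode S \<and>
        (\<forall>i<length ws. triple_encode (us ! i) (list_encode xs) (ws ! i) \<in> set_decode S)"
      by (intro exI[of _ "list_decode wl"]) (metis length_code_list_encode nth_code_list_encode arg_def)
  next
    assume "\<exists>ws. length ws = length us \<and> triple_encode (code_fst c) (list_encode ws) v \<in> set_decode S \<and>
        (\<forall>i<length ws. triple_encode (us ! i) (list_encode xs) (ws ! i) \<in> set_decode S)"
    then obtain ws where "length ws = length us" "triple_encode (code_fst c) (list_encode ws) v \<in> set_decode S"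
        "\<forall>i<length ws. triple_encode (us ! i) (list_encode xs) (ws ! i) \<in> set_decode S"
      by blast
    then show "\<exists>wl<S. length_code wl = length us \<and> triple_encode (code_fst c) wl v \<in> set_decode S \<and>
        (\<forall>i<length us. triple_encode (arg i us) (list_encode xs) (nth_code wl i) \<in> set_decode S)"
      using less_S by (intro exI[of _ "list_encode ws"]) (auto simp: arg_def)
  qed
  show ?thesis
  proof (cases "c mod 5 = 3")
    case True
    have "code_snd c = list_encode us"
      by (simp add: us_def)
    then show ?thesis
      using True comp by (simp add: justified_code_def justified_def us_def[symmetric])
  next
    case False
    then show ?thesis
      using less_S by (auto simp: justified_code_def justified_def cons_code_def) (use less_S in blast)
  qed
qed

definition valid_trace_code :: "nat \<Rightarrow> bool" where
  "valid_trace_code S \<longleftrightarrow> (\<forall>t<S. t \<in> set_decode S \<longrightarrow>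
     justified_code S (fst (prod_decode t)) (fst (prod_decode (snd (prod_decode t)))) (snd (prod_decode (snd (prod_decode t)))))"

lemma valid_trace_code_iff: "valid_trace_code S \<longleftrightarrow> valid_trace (set_decode S)"
proof -
  have "justified_code S (fst (prod_decode t)) (fst (prod_decode (snd (prod_decode t)))) (snd (prod_decode (snd (prod_decode t))))
      \<longleftrightarrow> justified (set_decode S) (fst (prod_decode t)) (list_decode (fst (prod_decode (snd (prod_decode t)))))
            (snd (prod_decode (snd (prod_decode t))))" for t
    using justified_code_iff[of S _ "list_decode (fst (prod_decode (snd (prod_decode t))))"] by simp
  moreover have "\<exists>c xs v. t = triple_encode c (list_encode xs) v" for t
    by (metis triple_encode_decode list_decode_inverse)
  ultimately show ?thesis
    unfolding valid_trace_code_def valid_trace_def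
    by (auto simp: triple_encode_def dest: mem_set_decode_less)
qed

definition certifies :: "nat \<Rightarrow> nat \<Rightarrow> nat \<Rightarrow> nat \<Rightarrow> bool" where
  "certifies s c x v \<longleftrightarrow> valid_trace_code s \<and> triple_encode c (list_encode [x]) v \<in> set_decode s"

lemma certifies_sound: "certifies s c x v \<Longrightarrow> v = eval_code c [x]"
  unfolding certifies_def valid_trace_code_iff using valid_trace_sound by blast

lemma certifies_exists: "\<exists>s. certifies s c x (eval_code c [x])"
proof -
  obtain A where "finite A" "valid_trace A" "triple_encode c (list_encode [x]) (eval_code c [x]) \<in> A"
    using valid_trace_complete by blast
  then show ?thesis
    by (intro exI[of _ "set_encode A"]) (simp add: certifies_def valid_trace_code_iff)
qed

lemma certifies_less: "certifies s c x v \<Longrightarrow> v < s"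
  unfolding certifies_def using mem_set_decode_less le_triple_encode(3) le_less_trans by blast

lemma prim_rec_triple_encode:
  "prim_rec n C \<Longrightarrow> prim_rec n L \<Longrightarrow> prim_rec n V \<Longrightarrow> prim_rec n (\<lambda>xs. triple_encode (C xs) (L xs) (V xs))"
  unfolding triple_encode_def by (intro prim_rec_prod_encode)

lemma prim_rec_code_fst: "prim_rec n C \<Longrightarrow> prim_rec n (\<lambda>xs. code_fst (C xs))"
  unfolding code_fst_def by (intro prim_rec_fst_prod_decode prim_rec_div prim_rec_const)

lemma prim_rec_code_snd: "prim_rec n C \<Longrightarrow> prim_rec n (\<lambda>xs. code_snd (C xs))"
  unfolding code_snd_def by (intro prim_rec_snd_prod_decode prim_rec_div prim_rec_const)

lemma prim_rec_cons_code: "prim_rec n X \<Longrightarrow> prim_rec n L \<Longrightarrow> prim_rec n (\<lambda>xs. cons_code (X xs) (L xs))"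
  unfolding cons_code_def by (intro prim_rec_Suc prim_rec_prod_encode)

lemmas prim_rec_code_intros =
  prim_rec_arith_intros prim_rec_tl prim_rec_div prim_rec_mod prim_rec_pred_member prim_rec_triple_encode
  prim_rec_fst_prod_decode prim_rec_snd_prod_decode prim_rec_prod_encode prim_rec_code_fst prim_rec_code_snd
  prim_rec_cons_code prim_rec_hd_code prim_rec_tl_code prim_rec_nth_code prim_rec_length_code

lemma prim_rec_pred_justified_code:
  "prim_rec n S \<Longrightarrow> prim_rec n C \<Longrightarrow> prim_rec n L \<Longrightarrow> prim_rec n V \<Longrightarrow>
    prim_rec_pred n (\<lambda>xs. justified_code (S xs) (C xs) (L xs) (V xs))"
  unfolding justified_code_def by (intro prim_rec_code_intros | simp only: arg_tl | assumption)+

lemma prim_rec_pred_certifies: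
  "prim_rec n S \<Longrightarrow> prim_rec n C \<Longrightarrow> prim_rec n X \<Longrightarrow> prim_rec n V \<Longrightarrow>
    prim_rec_pred n (\<lambda>xs. certifies (S xs) (C xs) (X xs) (V xs))"
  unfolding certifies_def valid_trace_code_def list_encode.simps
  by (intro prim_rec_code_intros prim_rec_pred_justified_code | simp only: arg_tl | assumption)+

section \<open>The diagonal digit sequence\<close>

text \<open>\<open>stage j = (c, k)\<close>: position \<open>j\<close> lies in the block that refutes code \<open>c\<close>, which
  began at position \<open>k\<close>; at position \<open>j\<close> the certificate \<open>j - k - 1\<close> for the value of code \<open>c\<close>
  at \<open>k\<close> is checked. Digits are indexed from \<open>1\<close>, so the first block starts at position \<open>1\<close>;
  the values \<open>0, 1, 2\<close> stand for the signed digits \<open>-1, 0, 1\<close>.\<close>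

definition found :: "nat \<Rightarrow> nat \<Rightarrow> nat \<Rightarrow> bool" where
  "found c k j \<longleftrightarrow> k < j \<and> (\<exists>v<j - k. certifies (j - k - 1) c k v)"

fun stage :: "nat \<Rightarrow> nat \<times> nat" where
  "stage 0 = (0, 1)"
| "stage (Suc j) = (let (c, k) = stage j in if found c k j then (Suc c, Suc j) else (c, k))"

definition diag_digit :: "nat \<Rightarrow> nat" where
  "diag_digit j = (let (c, k) = stage j in
     if found c k j then (if certifies (j - k - 1) c k 0 then 0 else 2) else 1)"

lemma prim_rec_pred_found:
  "prim_rec n C \<Longrightarrow> prim_rec n K \<Longrightarrow> prim_rec n J \<Longrightarrow> prim_rec_pred n (\<lambda>xs. found (C xs) (K xs) (J xs))"
  unfolding found_def
  by (intro prim_rec_code_intros prim_rec_pred_certifies | simp only: arg_tl | assumption)+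

lemma prim_rec_stage:
  assumes "prim_rec n J"
  shows "prim_rec n (\<lambda>xs. prod_encode (stage (J xs)))"
proof -
  define step where "step j r =
    (if found (fst (prod_decode r)) (snd (prod_decode r)) j then prod_encode (Suc (fst (prod_decode r)), Suc j) else r)"
    for j r
  have "rec_nat (prod_encode (0, 1)) step j = prod_encode (stage j)" for j
    by (induction j) (simp_all add: step_def split_def Let_def)
  moreover have "prim_rec n (\<lambda>xs. rec_nat (prod_encode (0, 1)) step (J xs))"
    unfolding step_def
    by (intro prim_rec_rec_nat[OF _ _ assms] prim_rec_code_intros prim_rec_pred_found)
  ultimately show ?thesis
    by simp
qed

lemma prim_rec1_diag_digit: "prim_rec1 diag_digit"
proof -
  have arg0: "prim_rec 1 (arg 0)"
    by (simp add: prim_rec_arg)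
  have "prim_rec 1 (\<lambda>xs. let p = prod_decode (prod_encode (stage (arg 0 xs))) in
      if found (fst p) (snd p) (arg 0 xs) then (if certifies (arg 0 xs - snd p - 1) (fst p) (snd p) 0 then 0 else 2) else 1)"
    unfolding Let_def
    by (intro prim_rec_code_intros prim_rec_pred_found prim_rec_pred_certifies prim_rec_stage arg0)
  then show ?thesis
    unfolding prim_rec1_iff diag_digit_def by (simp add: split_def)
qed

lemma diag_digit_le: "diag_digit j \<le> 2"
  by (simp add: diag_digit_def split_def Let_def)

lemma diag_digit_block_start: "stage j = (c, j) \<Longrightarrow> diag_digit j = 1"
  by (simp add: diag_digit_def found_def)

lemma diag_block:
  assumes start: "stage k = (c, k)"
  shows "\<exists>a>k. (\<forall>j. k \<le> j \<and> j < a \<longrightarrow> diag_digit j = 1) \<and>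
    diag_digit a = (if eval_code c [k] = 0 then 0 else 2) \<and> stage (Suc a) = (Suc c, Suc a)"
proof -
  define s where "s = (LEAST s. \<exists>v. certifies s c k v)"
  have "\<exists>s v. certifies s c k v"
    using certifies_exists by blast
  then have "\<exists>v. certifies s c k v"
    unfolding s_def by (rule LeastI_ex)
  then obtain v where v: "certifies s c k v"
    by blast
  have not_found: "\<not> found c k j" if "j < Suc (k + s)" for j
  proof
    assume "found c k j"
    then have "k < j" "\<exists>v. certifies (j - k - 1) c k v"
      unfolding found_def by auto
    moreover have "j - k - 1 < s"
      using that \<open>k < j\<close> by linarith
    ultimately show False
      using not_less_Least s_def by blast
  qed
  have stage_block: "stage j = (c, k)" if "k \<le> j" "j \<le> Suc (k + s)" for j
    using that
  proof (induction j)
    case (Suc j)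
    then show ?case
      using start not_found[of j] by (cases "k = Suc j") auto
  qed (use start in simp)
  have found_end: "found c k (Suc (k + s))"
    using v certifies_less[OF v] by (auto simp: found_def less_Suc_eq)
  have "certifies s c k 0 \<longleftrightarrow> eval_code c [k] = 0"
    using v certifies_sound[OF v] certifies_sound[of s c k 0] by auto
  then have "diag_digit (Suc (k + s)) = (if eval_code c [k] = 0 then 0 else 2)"
    using stage_block[of "Suc (k + s)"] found_end by (simp add: diag_digit_def)
  moreover have "diag_digit j = 1" if "k \<le> j" "j < Suc (k + s)" for j
    using that stage_block[of j] not_found[of j] by (simp add: diag_digit_def)
  moreover have "stage (Suc (Suc (k + s))) = (Suc c, Suc (Suc (k + s)))"
    using stage_block[of "Suc (k + s)"] found_end by simp
  ultimately show ?thesis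
    by (intro exI[of _ "Suc (k + s)"]) auto
qed

lemma ex_stage_start: "\<exists>k\<ge>1. stage k = (c, k)"
proof (induction c)
  case 0
  have "stage 1 = (0, 1)"
    by (simp add: found_def)
  then show ?case
    by blast
next
  case (Suc c)
  then obtain k where "k \<ge> 1" "stage k = (c, k)"
    by blast
  then show ?case
    using diag_block[of k c] by (metis le_SucI less_imp_le_nat order_trans)
qed

section \<open>Signed binary expansions\<close>

definition tail_sum :: "(nat \<Rightarrow> int) \<Rightarrow> nat \<Rightarrow> real" where
  "tail_sum u k = (\<Sum>i. of_int (u (Suc (k + i))) / 2 ^ Suc i)"

fun binary_prefix :: "(nat \<Rightarrow> int) \<Rightarrow> nat \<Rightarrow> int" where
  "binary_prefix u 0 = 0"
| "binary_prefix u (Suc k) = 2 * binary_prefix u k + u (Suc k)"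

lemma summable_signed_digits:
  assumes "\<forall>j. \<bar>u j\<bar> \<le> 1"
  shows "summable (\<lambda>i. of_int (u (f i)) / 2 ^ Suc i :: real)"
proof (rule summable_comparison_test)
  show "\<exists>N. \<forall>i\<ge>N. norm (of_int (u (f i)) / 2 ^ Suc i :: real) \<le> (1 / 2) ^ Suc i"
    using assms by (auto simp: abs_divide power_one_over divide_right_mono simp flip: of_int_abs)
  show "summable (\<lambda>i. (1 / 2 :: real) ^ Suc i)"
    using power_half_series by (rule sums_summable)
qed

lemma abs_tail_sum_le:
  assumes "\<forall>j. \<bar>u j\<bar> \<le> 1"
  shows "\<bar>tail_sum u k\<bar> \<le> 1"
proof -
  have "summable (\<lambda>i. \<bar>of_int (u (Suc (k + i))) / 2 ^ Suc i :: real\<bar>)"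
    using summable_signed_digits[of "\<lambda>j. \<bar>u j\<bar>" "\<lambda>i. Suc (k + i)"] assms by (simp add: abs_divide)
  then have "\<bar>tail_sum u k\<bar> \<le> (\<Sum>i. \<bar>of_int (u (Suc (k + i))) / 2 ^ Suc i :: real\<bar>)"
    unfolding tail_sum_def by (rule summable_rabs)
  also have "\<dots> \<le> (\<Sum>i. (1 / 2 :: real) ^ Suc i)"
    using assms \<open>summable _\<close> sums_summable[OF power_half_series]
    by (intro suminf_le) (auto simp: power_one_over divide_right_mono simp flip: of_int_abs)
  also have "\<dots> = 1"
    using power_half_series by (rule sums_unique[symmetric])
  finally show ?thesis .
qed

lemma tail_sum_nonneg: "\<forall>j. 0 \<le> u j \<and> u j \<le> 1 \<Longrightarrow> 0 \<le> tail_sum u k"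
  unfolding tail_sum_def by (intro suminf_nonneg summable_signed_digits) auto

lemma tail_sum_Suc:
  assumes "\<forall>j. \<bar>u j\<bar> \<le> 1"
  shows "tail_sum u k = (of_int (u (Suc k)) + tail_sum u (Suc k)) / 2"
proof -
  have "summable (\<lambda>i. of_int (u (Suc (k + i))) / 2 ^ Suc i :: real)"
    using assms by (rule summable_signed_digits)
  from suminf_split_head[OF this] have "tail_sum u k = of_int (u (Suc k)) / 2 + (\<Sum>i. of_int (u (Suc (Suc k + i))) / 2 ^ Suc (Suc i))"
    unfolding tail_sum_def by simp
  also have "(\<Sum>i. of_int (u (Suc (Suc k + i))) / 2 ^ Suc (Suc i) :: real) = tail_sum u (Suc k) / 2"
    unfolding tail_sum_def using suminf_divide[OF summable_signed_digits[OF assms], of "\<lambda>i. Suc (Suc k + i)" 2]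
    by (simp add: field_simps)
  finally show ?thesis
    by simp
qed

lemma tail_sum_scaled:
  assumes "\<forall>j. \<bar>u j\<bar> \<le> 1"
  shows "2 ^ k * tail_sum u 0 = of_int (binary_prefix u k) + tail_sum u k"
proof (induction k)
  case (Suc k)
  have "2 ^ Suc k * tail_sum u 0 = 2 * (of_int (binary_prefix u k) + tail_sum u k)"
    using Suc by simp
  also have "\<dots> = of_int (binary_prefix u (Suc k)) + tail_sum u (Suc k)"
    using tail_sum_Suc[OF assms, of k] by simp
  finally show ?case .
qed simp

lemma tail_sum_zeros:
  assumes "\<forall>j. \<bar>u j\<bar> \<le> 1" and "\<forall>j. k < j \<and> j \<le> k + r \<longrightarrow> u j = 0"
  shows "tail_sum u k = tail_sum u (k + r) / 2 ^ r"
  using assms(2)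
proof (induction r)
  case (Suc r)
  then show ?case
    using tail_sum_Suc[OF assms(1), of "k + r"] by simp
qed simp

lemma tail_sum_sign:
  assumes digits: "\<forall>j. \<bar>u j\<bar> \<le> 1" and "k \<le> m" and zeros: "\<forall>j. k < j \<and> j \<le> m \<longrightarrow> u j = 0"
    and "\<bar>u (Suc m)\<bar> = 1" and "u (Suc (Suc m)) = 0"
  shows "0 < of_int (u (Suc m)) * tail_sum u k" and "\<bar>tail_sum u k\<bar> < 1"
proof -
  have "tail_sum u m = of_int (u (Suc m)) / 2 + tail_sum u (Suc (Suc m)) / 4"
    using tail_sum_Suc[OF digits, of m] tail_sum_Suc[OF digits, of "Suc m"] \<open>u (Suc (Suc m)) = 0\<close> by simp
  moreover have "\<bar>tail_sum u (Suc (Suc m))\<bar> \<le> 1"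
    using digits by (rule abs_tail_sum_le)
  moreover have "of_int (u (Suc m)) = (1 :: real) \<or> of_int (u (Suc m)) = (-1 :: real)"
    using \<open>\<bar>u (Suc m)\<bar> = 1\<close> by (auto simp: abs_if split: if_splits)
  ultimately have m: "0 < of_int (u (Suc m)) * tail_sum u m" "\<bar>tail_sum u m\<bar> < 1"
    by (auto simp: abs_le_iff)
  have "tail_sum u k = tail_sum u m / 2 ^ (m - k)"
    using tail_sum_zeros[OF digits, of k "m - k"] zeros \<open>k \<le> m\<close> by simp
  moreover have "\<bar>tail_sum u m\<bar> < 2 ^ (m - k)"
    using m(2) one_le_power[of "2 :: real" "m - k"] by linarith
  ultimately show "0 < of_int (u (Suc m)) * tail_sum u k" "\<bar>tail_sum u k\<bar> < 1"
    using m by (auto simp: abs_divide divide_less_eq zero_less_mult_iff mult_less_0_iff)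
qed

lemma binary_digit_eq_tails:
  assumes p: "\<forall>j. \<bar>p j\<bar> \<le> 1" and d: "\<forall>j. \<bar>d j\<bar> \<le> 1"
    and eq: "of_int I + tail_sum p 0 = tail_sum d 0" and "d (Suc k) = 0"
  shows "\<exists>z. of_int (p (Suc k)) = 2 * of_int z + tail_sum d (Suc k) - tail_sum p (Suc k)"
proof -
  have "2 ^ Suc k * (of_int I + tail_sum p 0) = 2 ^ Suc k * tail_sum d 0"
    using eq by simp
  then have "2 ^ Suc k * of_int I + (of_int (binary_prefix p (Suc k)) + tail_sum p (Suc k)) =
      of_int (binary_prefix d (Suc k)) + tail_sum d (Suc k)"
    by (simp only: distrib_left tail_sum_scaled[OF p] tail_sum_scaled[OF d])
  then have "of_int (p (Suc k)) =
      2 * of_int (binary_prefix d k - binary_prefix p k - 2 ^ k * I) + tail_sum d (Suc k) - tail_sum p (Suc k)"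
    using \<open>d (Suc k) = 0\<close> by (simp add: algebra_simps)
  then show ?thesis
    by blast
qed

lemma binary_digit_forced:
  fixes P :: "nat \<Rightarrow> nat" and d :: "nat \<Rightarrow> int" and I :: int
  assumes P: "\<forall>j. P j \<le> 1" and d: "\<forall>j. \<bar>d j\<bar> \<le> 1"
    and eq: "of_int I + tail_sum (\<lambda>j. int (P j)) 0 = tail_sum d 0"
    and "1 \<le> k" and "d k = 0" and "tail_sum d k \<noteq> 0" and "\<bar>tail_sum d k\<bar> < 1"
  shows "P k = (if tail_sum d k < 0 then 1 else 0)"
proof -
  define p where "p = (\<lambda>j. int (P j))"
  have p: "\<forall>j. \<bar>p j\<bar> \<le> 1" "\<forall>j. 0 \<le> p j \<and> p j \<le> 1"
    using P unfolding p_def by auto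
  obtain k' where k: "k = Suc k'"
    using \<open>1 \<le> k\<close> by (cases k) auto
  obtain z where "of_int (p k) = 2 * of_int z + tail_sum d k - tail_sum p k"
    using binary_digit_eq_tails[OF p(1) d] eq \<open>d k = 0\<close> unfolding k p_def by blast
  then have Pk: "real (P k) = 2 * of_int z + tail_sum d k - tail_sum p k"
    by (simp add: p_def)
  have tp: "0 \<le> tail_sum p k" "tail_sum p k \<le> 1"
    using tail_sum_nonneg[OF p(2)] abs_tail_sum_le[OF p(1)] by (auto simp: abs_le_iff)
  \<comment> \<open>the wrong digit would put the integer \<open>z\<close> strictly between \<open>0\<close> and \<open>1\<close>\<close>
  have no_unit_interval: False if "0 < real_of_int z" "real_of_int z < 1"
    using that by simp
  have "P k = 0 \<or> P k = 1"
    using P le_Suc_eq by auto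
  then show ?thesis
  proof (cases "tail_sum d k < 0")
    case True
    have "P k \<noteq> 0"
    proof
      assume "P k = 0"
      then have "0 < real_of_int z" "real_of_int z < 1"
        using Pk tp True \<open>\<bar>tail_sum d k\<bar> < 1\<close> by linarith+
      then show False
        by (rule no_unit_interval)
    qed
    then show ?thesis
      using \<open>P k = 0 \<or> P k = 1\<close> True by simp
  next
    case False
    then have "0 < tail_sum d k"
      using \<open>tail_sum d k \<noteq> 0\<close> by simp
    have "P k \<noteq> 1"
    proof
      assume "P k = 1"
      then have "0 < real_of_int z" "real_of_int z < 1"
        using Pk tp \<open>0 < tail_sum d k\<close> \<open>\<bar>tail_sum d k\<bar> < 1\<close> by linarith+
      then show False
        by (rule no_unit_interval)
    qed
    then show ?thesis
      using \<open>P k = 0 \<or> P k = 1\<close> False by simp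
  qed
qed

section \<open>The diagonal number\<close>

definition diag_value :: real where
  "diag_value = tail_sum (\<lambda>j. int (diag_digit j) - 1) 0"

lemma diag_value_in_SPRCN: "diag_value \<in> SPRCN"
  unfolding SPRCN_def diag_value_def tail_sum_def
  using prim_rec1_diag_digit diag_digit_le by (intro CollectI exI[of _ 0] exI[of _ diag_digit]) simp

lemma diag_value_notin_PRCN: "diag_value \<notin> PRCN"
proof
  assume "diag_value \<in> PRCN"
  then obtain I P where P: "prim_rec1 P" "\<forall>i. P i \<le> 1"
    and eq: "diag_value = of_int I + (\<Sum>i. real (P (Suc i)) / 2 ^ Suc i)"
    unfolding PRCN_def by blast
  obtain c where c: "\<forall>x. P x = eval_code c [x]"
    using P(1) PR_ex_code unfolding prim_rec1_def by fastforce
  obtain k where k: "1 \<le> k" "stage k = (c, k)"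
    using ex_stage_start by blast
  then obtain a where a: "k < a" "\<forall>j. k \<le> j \<and> j < a \<longrightarrow> diag_digit j = 1"
      "diag_digit a = (if P k = 0 then 0 else 2)" "stage (Suc a) = (Suc c, Suc a)"
    using diag_block c by metis
  define d where "d j = int (diag_digit j) - 1" for j
  have d: "\<forall>j. \<bar>d j\<bar> \<le> 1"
    using diag_digit_le by (auto simp: d_def abs_le_iff)
  obtain m where m: "a = Suc m" "k \<le> m"
    using a(1) by (cases a) auto
  have "\<forall>j. k < j \<and> j \<le> m \<longrightarrow> d j = 0" "d (Suc (Suc m)) = 0"
    using a(2) diag_digit_block_start[OF a(4)] by (auto simp: d_def m)
  moreover have "\<bar>d (Suc m)\<bar> = 1"
    using a(3) by (simp add: d_def m)
  ultimately have sign: "0 < of_int (d a) * tail_sum d k" "\<bar>tail_sum d k\<bar> < 1"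
    using tail_sum_sign[OF d m(2)] by (simp_all add: m)
  have "of_int I + tail_sum (\<lambda>j. int (P j)) 0 = tail_sum d 0"
    using eq by (simp add: diag_value_def tail_sum_def d_def)
  moreover have "d k = 0"
    using a(1,2) by (simp add: d_def)
  ultimately have "P k = (if tail_sum d k < 0 then 1 else 0)"
    using binary_digit_forced[OF P(2) d _ k(1)] sign by fastforce
  then show False
    using sign(1) a(3) by (auto simp: d_def zero_less_mult_iff split: if_splits)
qed

lemma PRCN_subset_SPRCN: "PRCN \<subseteq> SPRCN"
proof
  fix x
  assume "x \<in> PRCN"
  then obtain I P where P: "prim_rec1 P" "\<forall>i. P i \<le> 1" and x: "x = of_int I + (\<Sum>i. real (P (Suc i)) / 2 ^ Suc i)"
    unfolding PRCN_def by blast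
  have "prim_rec1 (\<lambda>i. Suc (P i))"
    using P(1) unfolding prim_rec1_iff by (rule prim_rec_Suc)
  then show "x \<in> SPRCN"
    unfolding SPRCN_def using P(2) x by (intro CollectI exI[of _ I] exI[of _ "\<lambda>i. Suc (P i)"]) simp
qed

theorem theorem3:
  shows "PRCN \<subset> SPRCN"
  using PRCN_subset_SPRCN diag_value_in_SPRCN diag_value_notin_PRCN by blast

end
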